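(* If $(a_k)_{k\in\mathbb Z}\in l^1(\mathbb Z)$ satisfies $a_k=\frac12a_{3k-2}+a_{3k}+\frac12a_{3k+2}$ for all $k\in\mathbb Z$, then $a_k=0$ for all $k\neq0$. *)

theory Defs
  imports "HOL-Analysis.Analysis"
begin

end

theory Submission
  imports Defs
begin

text \<open>Let \<open>S\<^sub>r\<close> be the sum of \<open>|a|\<close> over the residue class \<open>r\<close> mod 3. Summing the
  triangle inequality for the recurrence over all \<open>k\<close> gives
  \<open>S\<^sub>0 + S\<^sub>1 + S\<^sub>2 \<le> S\<^sub>1/2 + S\<^sub>0 + S\<^sub>2/2\<close>, so \<open>S\<^sub>1 = S\<^sub>2 = 0\<close> and \<open>a\<close> vanishes off the
  multiples of 3. The recurrence then reduces to \<open>a (3k) = a k\<close>, and descent on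
  \<open>|k|\<close> shows \<open>a k = 0\<close> for all \<open>k \<noteq> 0\<close>.\<close>

lemma range_int_affine:
  fixes c d :: int
  assumes "c \<noteq> 0"
  shows "range (\<lambda>k. c * k + d) = {x. x mod c = d mod c}"
proof (intro set_eqI iffI)
  fix x assume "x \<in> {x. x mod c = d mod c}"
  then have "c dvd x - d" by (simp add: mod_eq_dvd_iff)
  then obtain k where "x - d = c * k" by blast
  then show "x \<in> range (\<lambda>k. c * k + d)" by (intro image_eqI[of _ _ k]) auto
qed auto

lemma has_sum_int_affine_iff:
  fixes f :: "int \<Rightarrow> 'a::topological_comm_monoid_add" and c d :: int
  assumes "c \<noteq> 0"
  shows "((\<lambda>k. f (c * k + d)) has_sum s) UNIV \<longleftrightarrow> (f has_sum s) {x. x mod c = d mod c}"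
proof -
  have "inj (\<lambda>k. c * k + d)" using assms by (auto simp: inj_def)
  then show ?thesis
    using has_sum_reindex[of "\<lambda>k. c * k + d" UNIV f s]
    by (simp add: range_int_affine[OF assms] o_def)
qed

lemma nonneg_summable_vanishes_off_multiples_of_3:
  fixes f :: "int \<Rightarrow> real"
  assumes nonneg: "\<And>k. f k \<ge> 0"
    and summable: "f summable_on UNIV"
    and sub: "\<And>k. f k \<le> f (3*k - 2) / 2 + f (3*k) + f (3*k + 2) / 2"
    and "\<not> 3 dvd j"
  shows "f j = 0"
proof -
  define S where "S r = infsum f {x. x mod 3 = r}" for r :: int
  have summable_on: "f summable_on A" for A
    using summable by (rule summable_on_subset_banach) simp
  have shifted: "((\<lambda>k. f (3*k + d)) has_sum S (d mod 3)) UNIV" for d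
    by (simp add: S_def has_sum_int_affine_iff summable_on)
  have total: "infsum f UNIV = S 0 + S 1 + S 2"
  proof -
    have "(UNIV :: int set) = {x. x mod 3 = 0} \<union> ({x. x mod 3 = 1} \<union> {x. x mod 3 = 2})"
      by auto
    then have "infsum f UNIV = infsum f ({x. x mod 3 = 0} \<union> ({x. x mod 3 = 1} \<union> {x. x mod 3 = 2}))"
      by simp
    then show ?thesis
      by (simp add: S_def infsum_Un_disjoint summable_on disjoint_iff)
  qed
  have "((\<lambda>k. (1/2) * f (3*k + -2) + f (3*k + 0) + (1/2) * f (3*k + 2))
          has_sum (1/2) * S (-2 mod 3) + S (0 mod 3) + (1/2) * S (2 mod 3)) UNIV"
    by (intro has_sum_add has_sum_cmult_right shifted)
  then have "infsum f UNIV \<le> (1/2) * S 1 + S 0 + (1/2) * S 2"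
    using has_sum_mono[OF has_sum_infsum[OF summable]] sub by simp
  then have "S 1 + S 2 \<le> 0" using total by simp
  moreover have "S 1 \<ge> 0" "S 2 \<ge> 0" by (simp_all add: S_def nonneg infsum_nonneg)
  moreover have "j mod 3 = 1 \<or> j mod 3 = 2" using \<open>\<not> 3 dvd j\<close> by presburger
  ultimately have "S (j mod 3) \<le> 0" by auto
  then show "f j = 0"
    by (intro nonneg_infsum_le_0D[of f "{x. x mod 3 = j mod 3}"])
      (auto simp: S_def nonneg summable_on)
qed

lemma dilation_invariant_vanishes_off_0:
  fixes g :: "int \<Rightarrow> 'a::zero" and b :: int
  assumes "\<bar>b\<bar> \<noteq> 1"
    and invariant: "\<And>k. g (b * k) = g k"
    and vanishes: "\<And>j. \<not> b dvd j \<Longrightarrow> g j = 0"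
    and "k \<noteq> 0"
  shows "g k = 0"
  using \<open>k \<noteq> 0\<close>
proof (induction "nat \<bar>k\<bar>" arbitrary: k rule: less_induct)
  case less
  show ?case
  proof (cases "b dvd k")
    case True
    then obtain m where k: "k = b * m" by blast
    with less.prems have "m \<noteq> 0" "b \<noteq> 0" by auto
    with \<open>\<bar>b\<bar> \<noteq> 1\<close> have "\<bar>m\<bar> < \<bar>b\<bar> * \<bar>m\<bar>" by (simp add: less_le)
    then have "\<bar>m\<bar> < \<bar>k\<bar>" by (simp add: k abs_mult)
    then have "g m = 0" using less.hyps[of m] \<open>m \<noteq> 0\<close> by simp
    then show ?thesis by (simp add: k invariant)
  qed (rule vanishes)
qed

theorem corollary3p6:
  fixes a :: "int \<Rightarrow> real"
  assumes l1: "(\<lambda>k. \<bar>a k\<bar>) summable_on UNIV"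
    and rec: "\<And>k. a k = a (3*k - 2) / 2 + a (3*k) + a (3*k + 2) / 2"
  shows "\<forall>k. k \<noteq> 0 \<longrightarrow> a k = 0"
proof -
  have triangle: "\<bar>a k\<bar> \<le> \<bar>a (3*k - 2)\<bar> / 2 + \<bar>a (3*k)\<bar> + \<bar>a (3*k + 2)\<bar> / 2" for k
    using rec[of k] by linarith
  have off_3: "a j = 0" if "\<not> 3 dvd j" for j
    using nonneg_summable_vanishes_off_multiples_of_3[OF _ l1 triangle that] by simp
  have dilation: "a (3*k) = a k" for k
  proof -
    have "\<not> 3 dvd (3*k - 2)" "\<not> 3 dvd (3*k + 2)" by presburger+
    then show ?thesis using rec[of k] off_3[of "3*k - 2"] off_3[of "3*k + 2"] by linarith
  qed
  have "a k = 0" if "k \<noteq> 0" for k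
    by (rule dilation_invariant_vanishes_off_0[of 3 a, OF _ dilation off_3 that]) simp
  then show ?thesis by blast
qed

end
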